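(* Let $\ell=(\ell_k)_{k\ge1}$ be a non-increasing sequence with $0<\ell_k<1$ and let $1<p\le2$. Let $(\omega_k)_{k\ge1}$ be i.i.d. uniform on $\mathbb{T}=\mathbb{R}/\mathbb{Z}$, $I_k=(\omega_k,\omega_k+\ell_k)$, $X_j(t)=\frac{1-\mathds{1}_{I_j}(t)}{1-\ell_j}$, $M_k(t)=\prod_{j=1}^kX_j(t)$ (with $M_0\equiv1$), and $D_k(t)=M_k(t)-M_{k-1}(t)$ for $k\ge2$, $D_1(t)=M_1(t)$, viewed as $1$-periodic functions. Then there is a constant $C$ depending only on $p$ and $\ell$ such that: (i) for all $k\ge1$ and $h>0$, $$\mathbb{E}\Big[\Big(\int_0^1|D_k(t+h)-D_k(t)|\,dt\Big)^p\Big]\le C\,(h^p+hk\ell_k^p)\prod_{j=1}^{k-1}(1-\ell_j)^{1-p};$$ (ii) for all $k\ge1$, $$\mathbb{E}\Big[\Big(\int_0^1|D_k(t)|\,dt\Big)^p\Big]\le C\,\ell_k^p\prod_{j=1}^{k-1}(1-\ell_j)^{1-p}.$$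
   Context: Empty products equal $1$. $\mathbb{T}=\mathbb{R}/\mathbb{Z}$ is identified with $[0,1)$. *)

theory Defs
  imports "HOL-Probability.Probability"
begin

text \<open>The circle T = R/Z is identified with [0,1). For a sample point,
  om :: nat => real gives the values omega_j, and l :: nat => real the lengths.
  The arc I_j = (omega_j, omega_j + l_j) taken mod 1 contains t iff
  frac(t - omega_j) lies in the open interval (0, l_j) (since 0 < l_j < 1).
  All functions below are 1-periodic in t.\<close>

definition arc_ind :: "(nat \<Rightarrow> real) \<Rightarrow> (nat \<Rightarrow> real) \<Rightarrow> nat \<Rightarrow> real \<Rightarrow> real" where
  "arc_ind l om j t = (if 0 < frac (t - om j) \<and> frac (t - om j) < l j then 1 else 0)"

definition Xf :: "(nat \<Rightarrow> real) \<Rightarrow> (nat \<Rightarrow> real) \<Rightarrow> nat \<Rightarrow> real \<Rightarrow> real" where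
  "Xf l om j t = (1 - arc_ind l om j t) / (1 - l j)"

definition Mf :: "(nat \<Rightarrow> real) \<Rightarrow> (nat \<Rightarrow> real) \<Rightarrow> nat \<Rightarrow> real \<Rightarrow> real" where
  "Mf l om k t = (\<Prod>j\<in>{1..k}. Xf l om j t)"

definition Df :: "(nat \<Rightarrow> real) \<Rightarrow> (nat \<Rightarrow> real) \<Rightarrow> nat \<Rightarrow> real \<Rightarrow> real" where
  "Df l om k t = (if k = 1 then Mf l om 1 t else Mf l om k t - Mf l om (k - 1) t)"

end

theory Submission
  imports Defs "HOL-Library.Periodic_Fun"
begin


definition bounded_borel :: "(real \<Rightarrow> real) \<Rightarrow> bool" where
  "bounded_borel f \<longleftrightarrow> f \<in> borel_measurable borel \<and> (\<exists>B. \<forall>v. \<bar>f v\<bar> \<le> B)"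

lemma bounded_borelI: "f \<in> borel_measurable borel \<Longrightarrow> (\<And>v. \<bar>f v\<bar> \<le> B) \<Longrightarrow> bounded_borel f"
  unfolding bounded_borel_def by blast

lemma bounded_borel_measurable: "bounded_borel f \<Longrightarrow> f \<in> borel_measurable borel"
  unfolding bounded_borel_def by blast

lemma bounded_borel_const [intro]: "bounded_borel (\<lambda>_. c)"
  by (rule bounded_borelI[where B="\<bar>c\<bar>"]) auto

lemma bounded_borel_add [intro]:
  "bounded_borel f \<Longrightarrow> bounded_borel g \<Longrightarrow> bounded_borel (\<lambda>v. f v + g v)"
  unfolding bounded_borel_def by (fastforce intro: abs_triangle_ineq[THEN order_trans] add_mono)

lemma bounded_borel_uminus [intro]: "bounded_borel f \<Longrightarrow> bounded_borel (\<lambda>v. - f v)"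
  unfolding bounded_borel_def by auto

lemma bounded_borel_diff [intro]:
  "bounded_borel f \<Longrightarrow> bounded_borel g \<Longrightarrow> bounded_borel (\<lambda>v. f v - g v)"
  using bounded_borel_add[of f "\<lambda>v. - g v"] by auto

lemma bounded_borel_mult [intro]:
  "bounded_borel f \<Longrightarrow> bounded_borel g \<Longrightarrow> bounded_borel (\<lambda>v. f v * g v)"
  unfolding bounded_borel_def abs_mult by (fastforce intro: mult_mono order_trans[OF abs_ge_zero])

lemma bounded_borel_abs [intro]: "bounded_borel f \<Longrightarrow> bounded_borel (\<lambda>v. \<bar>f v\<bar>)"
  unfolding bounded_borel_def by auto

lemma bounded_borel_powr [intro]:
  assumes "bounded_borel f" "\<And>v. 0 \<le> f v" "0 \<le> p"
  shows "bounded_borel (\<lambda>v. f v powr p)"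
proof -
  obtain B where "f \<in> borel_measurable borel" "\<And>v. \<bar>f v\<bar> \<le> B"
    using assms(1) unfolding bounded_borel_def by blast
  with assms(2,3) show ?thesis
    by (intro bounded_borelI[where B="B powr p"]) (auto intro: powr_mono2)
qed

lemma bounded_borel_prod [intro]:
  "(\<And>i. i \<in> I \<Longrightarrow> bounded_borel (f i)) \<Longrightarrow> bounded_borel (\<lambda>v. \<Prod>i\<in>I. f i v)"
  by (induction I rule: infinite_finite_induct) auto

lemma bounded_borel_sum [intro]:
  "(\<And>i. i \<in> I \<Longrightarrow> bounded_borel (f i)) \<Longrightarrow> bounded_borel (\<lambda>v. \<Sum>i\<in>I. f i v)"
  by (induction I rule: infinite_finite_induct) auto

lemma bounded_borel_compose:
  "bounded_borel f \<Longrightarrow> g \<in> borel_measurable borel \<Longrightarrow> bounded_borel (\<lambda>v. f (g v))"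
  unfolding bounded_borel_def by auto

lemma bounded_borel_shift: "bounded_borel f \<Longrightarrow> bounded_borel (\<lambda>v. f (v + c))"
  by (rule bounded_borel_compose) simp_all

lemma bounded_borel_shift_minus: "bounded_borel f \<Longrightarrow> bounded_borel (\<lambda>v. f (v - c))"
  by (rule bounded_borel_compose) simp_all

lemma bounded_borel_set_integrable:
  assumes "bounded_borel f" and A: "A \<in> sets borel" "A \<subseteq> {a..b}"
  shows "set_integrable lborel A f"
proof -
  obtain B where [measurable]: "f \<in> borel_measurable borel" and B: "\<And>v. \<bar>f v\<bar> \<le> B"
    using assms(1) unfolding bounded_borel_def by blast
  have "emeasure lborel A \<le> emeasure lborel {a..b}"
    using A by (intro emeasure_mono) auto
  also have "\<dots> < \<infinity>"
    by (cases "a \<le> b") auto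
  finally have "emeasure lborel A < \<infinity>" .
  then have "set_integrable lborel A (\<lambda>_. B)"
    using A unfolding set_integrable_def by (intro integrable_scaleR_left integrable_real_indicator) auto
  moreover have "set_borel_measurable lborel A f"
    using A by (simp add: set_borel_measurable_def)
  ultimately show ?thesis
    by (rule set_integrable_bound) (use B in \<open>auto intro: order_trans[OF _ abs_ge_self]\<close>)
qed

lemma set_integral_translate:
  fixes f :: "real \<Rightarrow> real"
  shows "(LINT t:{a..<b}|lborel. f (t + c)) = (LINT s:{a+c..<b+c}|lborel. f s)"
proof -
  have "(LINT s:{a+c..<b+c}|lborel. f s)
      = (\<integral>t. indicator {a+c..<b+c} (c + t) * f (c + t) \<partial>lborel)"
    using lborel_integral_real_affine[of 1 "\<lambda>s. indicator {a+c..<b+c} s * f s" c]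
    by (simp add: set_lebesgue_integral_def)
  also have "\<dots> = (LINT t:{a..<b}|lborel. f (t + c))"
    by (simp add: set_lebesgue_integral_def indicator_def add.commute)
  finally show ?thesis ..
qed

lemma set_integral_Icc_Ico:
  fixes f :: "real \<Rightarrow> real"
  shows "(LINT t:{a..b}|lborel. f t) = (LINT t:{a..<b}|lborel. f t)"
  by (rule set_integral_discrete_difference[where X="{b}"]) auto

lemma set_integral_periodic_shift:
  fixes \<psi> :: "real \<Rightarrow> real"
  assumes bdd: "bounded_borel \<psi>" and per: "periodic_fun_simple' \<psi>"
  shows "(LINT t:{0..1}|lborel. \<psi> (t + c)) = (LINT t:{0..1}|lborel. \<psi> t)"
proof -
  interpret per: periodic_fun_simple' \<psi> by (rule per)
  define a where "a = frac c"
  have a: "0 \<le> a" "a < 1" unfolding a_def by (auto simp: frac_lt_1)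
  have int: "set_integrable lborel {x..<y} \<psi>" "set_integrable lborel {x..<y} (\<lambda>t. \<psi> (t + z))" for x y z
    using bdd bounded_borel_shift[OF bdd] by (auto intro: bounded_borel_set_integrable[where a=x and b=y])
  have "\<psi> (t + c) = \<psi> (t + a + real_of_int \<lfloor>c\<rfloor>)" for t
    by (simp add: a_def frac_def)
  then have "(LINT t:{0..1}|lborel. \<psi> (t + c)) = (LINT t:{0..<1-a} \<union> {1-a..<1}|lborel. \<psi> (t + a))"
    using a by (simp add: set_integral_Icc_Ico per.plus_of_int ivl_disj_un)
  also have "\<dots> = (LINT t:{0..<1-a}|lborel. \<psi> (t + a)) + (LINT t:{1-a..<1}|lborel. \<psi> (t + (a - 1)))"
    using int per.minus_1[of "_ + a"] by (simp add: set_integral_Un diff_add_eq add_diff_eq)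
  also have "\<dots> = (LINT s:{a..<1} \<union> {0..<a}|lborel. \<psi> s)"
    using int by (simp add: set_integral_translate set_integral_Un)
  also have "{a..<1} \<union> {0..<a} = {0..<1::real}"
    using a by auto
  finally show ?thesis
    by (simp add: set_integral_Icc_Ico)
qed

lemma set_integral_periodic_reflect:
  fixes \<psi> :: "real \<Rightarrow> real"
  assumes "bounded_borel \<psi>" "periodic_fun_simple' \<psi>"
  shows "(LINT t:{0..1}|lborel. \<psi> (c - t)) = (LINT t:{0..1}|lborel. \<psi> t)"
proof -
  have "(LINT t:{0..1}|lborel. \<psi> (c - t)) = (\<integral>t. indicator {0..1} (1 - t) * \<psi> (c - (1 - t)) \<partial>lborel)"
    using lborel_integral_real_affine[of "-1" "\<lambda>t. indicator {0..1} t * \<psi> (c - t)" 1]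
    by (simp add: set_lebesgue_integral_def)
  also have "\<dots> = (LINT t:{0..1}|lborel. \<psi> (t + (c - 1)))"
    unfolding set_lebesgue_integral_def
    by (rule Bochner_Integration.integral_cong) (auto simp: indicator_def algebra_simps)
  finally show ?thesis
    using set_integral_periodic_shift[OF assms] by simp
qed

lemma integral_uniform_periodic:
  fixes \<psi> :: "real \<Rightarrow> real"
  assumes [measurable]: "X \<in> borel_measurable M"
    and X: "distr M borel X = uniform_measure lborel {0..<1}"
    and \<psi>: "bounded_borel \<psi>" "periodic_fun_simple' \<psi>"
  shows "(\<integral>x. \<psi> (c - X x) \<partial>M) = (LINT t:{0..1}|lborel. \<psi> t)"
proof -
  have [measurable]: "\<psi> \<in> borel_measurable borel"
    using \<psi>(1) by (rule bounded_borel_measurable)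
  have "(\<integral>x. \<psi> (c - X x) \<partial>M) = (\<integral>u. \<psi> (c - u) \<partial>uniform_measure lborel {0..<1})"
    by (simp flip: X add: integral_distr)
  also have "\<dots> = (\<integral>u. \<psi> (c - u) \<partial>density lborel (\<lambda>u. ennreal (indicator {0..<1} u)))"
    by (simp add: uniform_measure_def ennreal_indicator divide_ennreal_def)
  also have "\<dots> = (LINT u:{0..<1}|lborel. \<psi> (c - u))"
    unfolding set_lebesgue_integral_def by (subst integral_density) auto
  also have "\<dots> = (LINT t:{0..1}|lborel. \<psi> t)"
    using set_integral_periodic_reflect[OF \<psi>] by (simp add: set_integral_Icc_Ico)
  finally show ?thesis .
qed

lemma powr_above_tangent:
  fixes x m p :: real
  assumes "0 \<le> x" "0 \<le> m" "1 \<le> p"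
  shows "m powr p + p * m powr (p - 1) * (x - m) \<le> x powr p"
proof (cases "m = 0")
  case False
  with assms have "0 < m" by simp
  show ?thesis
  proof (cases "x = 0")
    case True
    have "m powr (p - 1) * m = m powr p"
      using \<open>0 < m\<close> by (simp add: powr_diff)
    then have "m powr p + p * m powr (p - 1) * (x - m) = (1 - p) * m powr p"
      using True by (simp add: algebra_simps)
    also have "\<dots> \<le> 0"
      using assms by (simp add: mult_nonpos_nonneg)
    finally show ?thesis
      using True by simp
  next
    case False
    have "p * m powr (p - 1) * (x - m) \<le> x powr p - m powr p"
    proof (rule convex_on_imp_above_tangent[where A="{0<..}"])
      show "convex_on {0<..} (\<lambda>x. x powr p)"
        using assms(3) by (rule powr_convex)
      show "connected {0::real<..}"
        by (simp add: is_interval_connected is_interval_ci)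
      show "((\<lambda>x. x powr p) has_field_derivative p * m powr (p - 1)) (at m within {0<..})"
        using has_real_derivative_powr[OF \<open>0 < m\<close>] by (rule has_field_derivative_at_within)
    qed (use assms False \<open>0 < m\<close> in \<open>simp_all add: interior_open\<close>)
    then show ?thesis
      by simp
  qed
qed simp

lemma set_integral_nonneg:
  fixes f :: "'a \<Rightarrow> real"
  assumes "\<And>x. x \<in> A \<Longrightarrow> 0 \<le> f x"
  shows "0 \<le> (LINT x:A|M. f x)"
  unfolding set_lebesgue_integral_def
  by (rule Bochner_Integration.integral_nonneg) (simp add: assms indicator_def)

text \<open>Weighted Jensen inequality for \<open>x \<mapsto> x powr p\<close>: the tangent line at the weighted mean
  lies below the graph.\<close>
lemma set_integral_powr_weighted_le:
  fixes f w :: "'a \<Rightarrow> real"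
  assumes int: "set_integrable M A w" "set_integrable M A (\<lambda>x. f x * w x)"
      "set_integrable M A (\<lambda>x. f x powr p * w x)"
    and nonneg: "\<And>x. x \<in> A \<Longrightarrow> 0 \<le> f x" "\<And>x. x \<in> A \<Longrightarrow> 0 \<le> w x" and p: "1 \<le> p"
  shows "(LINT x:A|M. f x * w x) powr p
    \<le> (LINT x:A|M. f x powr p * w x) * (LINT x:A|M. w x) powr (p - 1)"
proof -
  define W where "W = (LINT x:A|M. w x)"
  define F where "F = (LINT x:A|M. f x * w x)"
  define G where "G = (LINT x:A|M. f x powr p * w x)"
  have "0 \<le> W" "0 \<le> G"
    unfolding W_def G_def using nonneg by (auto intro!: set_integral_nonneg)
  show ?thesis
  proof (cases "W = 0")
    case True
    have "AE x in M. indicator A x * w x = 0"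
      using True int(1) nonneg(2) unfolding W_def set_lebesgue_integral_def set_integrable_def
      by (subst integral_nonneg_eq_0_iff_AE[symmetric]) (auto simp: indicator_def)
    then have "F = 0"
      unfolding F_def set_lebesgue_integral_def by (auto intro: integral_eq_zero_AE)
    with \<open>0 \<le> G\<close> show ?thesis
      by (simp add: F_def[symmetric] G_def[symmetric] W_def[symmetric] True)
  next
    case False
    with \<open>0 \<le> W\<close> have "0 < W" by simp
    define m where "m = F / W"
    have "0 \<le> m"
      unfolding m_def F_def using \<open>0 \<le> W\<close> nonneg
      by (intro divide_nonneg_nonneg set_integral_nonneg) auto
    have "m powr p * W = m powr p * W + p * m powr (p - 1) * (F - m * W)"
      using \<open>0 < W\<close> by (simp add: m_def)
    also have "\<dots> = (LINT x:A|M. m powr p * w x) + (LINT x:A|M. p * m powr (p - 1) * (f x * w x - m * w x))"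
      using int by (simp add: W_def F_def set_integral_diff)
    also have "\<dots> = (LINT x:A|M. m powr p * w x + p * m powr (p - 1) * (f x * w x - m * w x))"
      using int by (intro set_integral_add(2)[symmetric]) auto
    also have "\<dots> \<le> G"
      unfolding G_def
    proof (rule set_integral_mono)
      fix x assume "x \<in> A"
      then show "m powr p * w x + p * m powr (p - 1) * (f x * w x - m * w x) \<le> f x powr p * w x"
        using mult_right_mono[OF powr_above_tangent[OF nonneg(1) \<open>0 \<le> m\<close> p] nonneg(2)]
        by (simp add: algebra_simps)
    qed (use int in auto)
    finally have "m powr p * W \<le> G" .
    have "F powr p = (m * W) powr p"
      using \<open>0 < W\<close> by (simp add: m_def)
    also have "\<dots> = m powr p * W * W powr (p - 1)"
      using \<open>0 < W\<close> by (simp add: powr_mult powr_diff)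
    also have "\<dots> \<le> G * W powr (p - 1)"
      using \<open>m powr p * W \<le> G\<close> by (rule mult_right_mono) simp
    finally show ?thesis
      by (simp add: F_def G_def W_def)
  qed
qed

lemma borel_measurable_frac [measurable]: "(frac :: real \<Rightarrow> real) \<in> borel_measurable borel"
  unfolding frac_def by measurable

definition arc_indicator :: "real \<Rightarrow> real \<Rightarrow> real" where
  "arc_indicator L v = (if 0 < frac v \<and> frac v < L then 1 else 0)"

definition gap_density :: "real \<Rightarrow> real \<Rightarrow> real" where
  "gap_density L v = (1 - arc_indicator L v) / (1 - L)"

lemma borel_measurable_arc_indicator [measurable]: "arc_indicator L \<in> borel_measurable borel"
  unfolding arc_indicator_def by measurable

lemma borel_measurable_gap_density [measurable]: "gap_density L \<in> borel_measurable borel"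
  unfolding gap_density_def by measurable

lemma Xf_eq_gap_density: "Xf l om j t = gap_density (l j) (t - om j)"
  by (simp add: Xf_def arc_ind_def gap_density_def arc_indicator_def)

lemma arc_indicator_cases: "arc_indicator L v = 0 \<or> arc_indicator L v = 1"
  by (simp add: arc_indicator_def)

lemma periodic_arc_indicator: "periodic_fun_simple' (arc_indicator L)"
  by unfold_locales (simp add: arc_indicator_def frac_1_eq)

lemma periodic_gap_density: "periodic_fun_simple' (gap_density L)"
  by unfold_locales (simp add: gap_density_def periodic_fun_simple'.plus_period[OF periodic_arc_indicator])

lemma arc_indicator_plus_1 [simp]:
  "arc_indicator L (v + 1) = arc_indicator L v" "arc_indicator L (v + 1 + c) = arc_indicator L (v + c)"
  using periodic_fun_simple'.plus_period[OF periodic_arc_indicator, of L v]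
    periodic_fun_simple'.plus_period[OF periodic_arc_indicator, of L "v + c"] by (simp_all add: add_ac)

lemma gap_density_plus_1 [simp]:
  "gap_density L (v + 1) = gap_density L v" "gap_density L (v + 1 + c) = gap_density L (v + c)"
  using periodic_fun_simple'.plus_period[OF periodic_gap_density, of L v]
    periodic_fun_simple'.plus_period[OF periodic_gap_density, of L "v + c"] by (simp_all add: add_ac)

lemma bounded_borel_arc_indicator [intro]: "bounded_borel (arc_indicator L)"
  by (rule bounded_borelI[where B=1]) (auto simp: arc_indicator_def)

lemma bounded_borel_gap_density [intro]: "bounded_borel (gap_density L)"
  by (rule bounded_borelI[where B="1 / \<bar>1 - L\<bar>"])
    (auto simp: gap_density_def arc_indicator_def abs_divide)

lemma gap_density_nonneg: "L < 1 \<Longrightarrow> 0 \<le> gap_density L v"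
  by (simp add: gap_density_def arc_indicator_def)

lemma arc_indicator_unit_interval:
  assumes "0 \<le> s" "s \<le> 1" "L \<le> 1"
  shows "arc_indicator L s = indicator {0<..<L} s"
  using assms by (cases "s = 1") (auto simp: arc_indicator_def indicator_def frac_eq)

lemma set_integral_fun_arc_indicator:
  assumes "0 \<le> L" "L \<le> 1"
  shows "(LINT s:{0..1}|lborel. \<phi> (arc_indicator L s)) = (1 - L) * \<phi> 0 + L * \<phi> 1"
proof -
  have "indicator {0..1} s * \<phi> (arc_indicator L s)
      = \<phi> 0 * indicator {0..1} s + (\<phi> 1 - \<phi> 0) * indicator {0<..<L} s" for s
    using assms arc_indicator_unit_interval[of s L] by (auto simp: indicator_def)
  then have "(LINT s:{0..1}|lborel. \<phi> (arc_indicator L s))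
      = (\<integral>s. \<phi> 0 * indicator {0..1} s + (\<phi> 1 - \<phi> 0) * indicator {0<..<L} s \<partial>lborel)"
    by (simp add: set_lebesgue_integral_def)
  also have "\<dots> = \<phi> 0 + (\<phi> 1 - \<phi> 0) * L"
    using assms by (subst Bochner_Integration.integral_add) auto
  finally show ?thesis
    by (simp add: algebra_simps)
qed

lemma set_integral_gap_density_powr:
  assumes "0 \<le> L" "L < 1" "0 < p"
  shows "(LINT s:{0..1}|lborel. gap_density L s powr p) = (1 - L) powr (1 - p)"
  using set_integral_fun_arc_indicator[of L "\<lambda>a. ((1 - a) / (1 - L)) powr p"] assms
  by (simp add: gap_density_def powr_diff powr_divide)

lemma set_integral_abs_gap_density:
  assumes "0 \<le> L" "L < 1"
  shows "(LINT s:{0..1}|lborel. \<bar>gap_density L s\<bar>) = 1"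
  using set_integral_fun_arc_indicator[of L "\<lambda>a. \<bar>(1 - a) / (1 - L)\<bar>"] assms
  by (simp add: gap_density_def)

lemma set_integral_abs_gap_density_minus_1:
  assumes "0 \<le> L" "L < 1"
  shows "(LINT s:{0..1}|lborel. \<bar>gap_density L s - 1\<bar>) = 2 * L"
  using set_integral_fun_arc_indicator[of L "\<lambda>a. \<bar>(1 - a) / (1 - L) - 1\<bar>"] assms
  by (simp add: gap_density_def field_simps)

lemma set_integral_arc_indicator_increment:
  assumes "0 < h" "0 \<le> L" "L \<le> 1"
  shows "(LINT s:{0..1}|lborel. \<bar>arc_indicator L (s + h) - arc_indicator L s\<bar>) \<le> 2 * h"
proof -
  have bound: "indicator {0..1} s * \<bar>arc_indicator L (s + h) - arc_indicator L s\<bar>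
      \<le> indicator {L-h..L} s + indicator {1-h..1} s + indicator {0} s" for s
  proof (cases "0 \<le> s \<and> s < 1 - h")
    case True
    with assms show ?thesis
      by (auto simp: arc_indicator_unit_interval indicator_def)
  qed (auto simp: indicator_def arc_indicator_def)
  have "set_integrable lborel {0..1} (\<lambda>s. \<bar>arc_indicator L (s + h) - arc_indicator L s\<bar>)"
    by (intro bounded_borel_set_integrable bounded_borel_abs bounded_borel_diff bounded_borel_shift
        bounded_borel_arc_indicator) auto
  then have "(LINT s:{0..1}|lborel. \<bar>arc_indicator L (s + h) - arc_indicator L s\<bar>)
      \<le> (\<integral>s. indicator {L-h..L} s + indicator {1-h..1} s + indicator {0} s \<partial>lborel)"
    unfolding set_lebesgue_integral_def set_integrable_def
  proof (rule integral_mono)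
    show "integrable lborel (\<lambda>s. indicator {L-h..L} s + indicator {1-h..1} s + indicator {0} s :: real)"
      using assms by (intro Bochner_Integration.integrable_add integrable_real_indicator) auto
  qed (use bound in simp)
  also have "\<dots> = 2 * h"
    using assms by simp
  finally show ?thesis .
qed

lemma periodic_fun_simple'_shift: "periodic_fun_simple' f \<Longrightarrow> periodic_fun_simple' (\<lambda>v. f (v + c))"
  unfolding periodic_fun_simple'_def by (metis add.commute add.left_commute)

lemma periodic_fun_simple'_compose:
  "periodic_fun_simple' f \<Longrightarrow> periodic_fun_simple' g \<Longrightarrow> periodic_fun_simple' (\<lambda>v. H (f v) (g v))"
  unfolding periodic_fun_simple'_def by simp

lemma periodic_fun_simple'_const: "periodic_fun_simple' (\<lambda>_. c)"
  by unfold_locales simp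

lemma abs_prod_diff_powr_le:
  fixes a b :: "'i \<Rightarrow> real"
  assumes "finite I" "\<And>i. i \<in> I \<Longrightarrow> 0 \<le> a i" "\<And>i. i \<in> I \<Longrightarrow> 0 \<le> b i" "0 < p"
  shows "\<bar>prod a I - prod b I\<bar> powr p \<le> (prod a I powr p + prod b I powr p) * (\<Sum>i\<in>I. of_bool (a i \<noteq> b i))"
proof (cases "\<forall>i\<in>I. a i = b i")
  case True
  then show ?thesis
    using prod.cong[of I I a b] by simp
next
  case False
  then obtain i where "i \<in> I" "a i \<noteq> b i"
    by blast
  then have "1 \<le> (\<Sum>i\<in>I. of_bool (a i \<noteq> b i) :: real)"
    using assms(1) by (intro member_le_sum[of i, THEN order_trans[rotated]]) auto
  have "0 \<le> prod a I" "0 \<le> prod b I"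
    using assms by (auto intro: prod_nonneg)
  then have "\<bar>prod a I - prod b I\<bar> powr p \<le> max (prod a I) (prod b I) powr p"
    using assms(4) by (intro powr_mono2) auto
  also have "\<dots> \<le> prod a I powr p + prod b I powr p"
    by (simp add: max_def)
  also have "\<dots> \<le> (prod a I powr p + prod b I powr p) * (\<Sum>i\<in>I. of_bool (a i \<noteq> b i))"
    using \<open>1 \<le> _\<close> mult_left_mono[of 1 _ "prod a I powr p + prod b I powr p"] by simp
  finally show ?thesis .
qed

lemma powr_add_le:
  fixes a b p :: real
  assumes "0 \<le> a" "0 \<le> b" "0 \<le> p"
  shows "(a + b) powr p \<le> 2 powr p * (a powr p + b powr p)"
proof -
  have "(a + b) powr p \<le> (2 * max a b) powr p"
    using assms by (intro powr_mono2) auto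
  also have "\<dots> \<le> 2 powr p * (a powr p + b powr p)"
    using assms by (simp add: powr_mult max_def)
  finally show ?thesis .
qed

text \<open>Weighted Jensen inequality for a 1-periodic weight, whose total mass does not depend
  on the shift.\<close>
lemma set_integral_powr_periodic_weight_le:
  assumes f: "bounded_borel f" "\<And>t. 0 \<le> f t"
    and w: "bounded_borel w" "periodic_fun_simple' w" "\<And>v. 0 \<le> w v" and p: "1 \<le> p"
  shows "(LINT t:{0..1}|lborel. f t * w (t - c)) powr p
    \<le> (LINT s:{0..1}|lborel. w s) powr (p - 1) * (LINT t:{0..1}|lborel. f t powr p * w (t - c))"
proof -
  have integrable: "set_integrable lborel {0..1} g" if "bounded_borel g" for g
    using that by (rule bounded_borel_set_integrable) auto
  have "bounded_borel (\<lambda>t. w (t - c))"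
    using w(1) by (rule bounded_borel_shift_minus)
  then have "(LINT t:{0..1}|lborel. f t * w (t - c)) powr p
      \<le> (LINT t:{0..1}|lborel. f t powr p * w (t - c)) * (LINT t:{0..1}|lborel. w (t - c)) powr (p - 1)"
    using f w p
    by (intro set_integral_powr_weighted_le integrable bounded_borel_mult bounded_borel_powr) auto
  moreover have "(LINT t:{0..1}|lborel. w (t - c)) = (LINT s:{0..1}|lborel. w s)"
    using set_integral_periodic_shift[OF w(1,2), of "- c"] by simp
  ultimately show ?thesis
    by (simp add: mult.commute)
qed

lemma Df_eq_Mf_times: "1 \<le> k \<Longrightarrow> Df l om k t = Mf l om (k - 1) t * (Xf l om k t - of_bool (1 < k))"
  by (cases k) (auto simp: Df_def Mf_def algebra_simps)

lemma Mf_nonneg: "(\<And>j. 1 \<le> j \<Longrightarrow> l j < 1) \<Longrightarrow> 0 \<le> Mf l om k t"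
  unfolding Mf_def Xf_eq_gap_density by (intro prod_nonneg gap_density_nonneg) auto

lemma bounded_borel_Mf [intro]: "bounded_borel (Mf l om k)"
  unfolding Mf_def Xf_eq_gap_density
  by (intro bounded_borel_prod bounded_borel_shift_minus bounded_borel_gap_density)

lemma Mf_powr: "Mf l om k t powr p = (\<Prod>j\<in>{1..k}. gap_density (l j) (t - om j) powr p)"
  unfolding Mf_def Xf_eq_gap_density by (rule prod_powr_distrib)

lemma set_integral_sum:
  fixes f :: "'i \<Rightarrow> 'a \<Rightarrow> real"
  assumes "\<And>i. i \<in> I \<Longrightarrow> set_integrable M A (f i)"
  shows "(LINT x:A|M. \<Sum>i\<in>I. f i x) = (\<Sum>i\<in>I. LINT x:A|M. f i x)"
  using assms unfolding set_lebesgue_integral_def set_integrable_def scaleR_sum_right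
  by (rule Bochner_Integration.integral_sum)

lemma bounded_borel_unit_integrable: "bounded_borel f \<Longrightarrow> set_integrable lborel {0..1} f"
  by (rule bounded_borel_set_integrable) auto

lemma abs_gap_density_diff:
  "L < 1 \<Longrightarrow> of_bool (gap_density L u \<noteq> gap_density L v) = \<bar>arc_indicator L u - arc_indicator L v\<bar>"
  using arc_indicator_cases[of L u] arc_indicator_cases[of L v] by (auto simp: gap_density_def)

locale iid_uniform_circle = prob_space M for M :: "'a measure" +
  fixes \<omega> :: "nat \<Rightarrow> 'a \<Rightarrow> real"
  assumes indep: "indep_vars (\<lambda>_. borel) \<omega> {1..}"
    and uniform: "\<And>k. 1 \<le> k \<Longrightarrow> distr M borel (\<omega> k) = uniform_measure lborel {0..<1}"
begin

lemma measurable_\<omega>: "1 \<le> j \<Longrightarrow> \<omega> j \<in> borel_measurable M"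
  using indep by (auto simp: indep_vars_def)

text \<open>Fubini turns the expectation of the integral into the integral of the expectations, which
  factor by independence; each factor is a full period of \<open>\<psi> j\<close> since \<open>\<omega> j\<close> is uniform.\<close>
lemma integral_shifted_prod:
  assumes J: "finite J" "J \<subseteq> {1..}"
    and \<psi>: "\<And>j. j \<in> J \<Longrightarrow> bounded_borel (\<psi> j)" "\<And>j. j \<in> J \<Longrightarrow> periodic_fun_simple' (\<psi> j)"
  shows "integrable M (\<lambda>x. LINT t:{0..1}|lborel. \<Prod>j\<in>J. \<psi> j (t - \<omega> j x))"
    and "expectation (\<lambda>x. LINT t:{0..1}|lborel. \<Prod>j\<in>J. \<psi> j (t - \<omega> j x))
      = (\<Prod>j\<in>J. LINT s:{0..1}|lborel. \<psi> j s)"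
proof -
  interpret pair_sigma_finite M lborel ..
  have \<psi>_measurable: "\<psi> j \<in> borel_measurable borel" and \<omega>_measurable: "\<omega> j \<in> borel_measurable M"
    if "j \<in> J" for j
    using that J(2) \<psi>(1) by (auto simp: subset_eq intro: bounded_borel_measurable measurable_\<omega>)
  obtain B where B: "\<And>j v. j \<in> J \<Longrightarrow> \<bar>\<psi> j v\<bar> \<le> B j"
    using \<psi>(1) unfolding bounded_borel_def by metis
  define F where "F z = indicator {0..1} (snd z) * (\<Prod>j\<in>J. \<psi> j (snd z - \<omega> j (fst z)))"
    for z :: "'a \<times> real"
  have "(\<lambda>z. \<psi> j (snd z - \<omega> j (fst z))) \<in> borel_measurable (M \<Otimes>\<^sub>M lborel)" if "j \<in> J" for j
    using \<psi>_measurable[OF that] \<omega>_measurable[OF that] by measurable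
  then have F_measurable: "F \<in> borel_measurable (M \<Otimes>\<^sub>M lborel)"
    unfolding F_def by (intro borel_measurable_times borel_measurable_prod) auto
  have "emeasure (M \<Otimes>\<^sub>M lborel) (space M \<times> {0..1::real}) < \<infinity>"
    by (subst lborel.emeasure_pair_measure_Times) (auto simp: emeasure_space_1)
  then have "integrable (M \<Otimes>\<^sub>M lborel) (\<lambda>z. (\<Prod>j\<in>J. B j) * indicator (space M \<times> {0..1::real}) z)"
    by (intro integrable_mult_right integrable_real_indicator) auto
  then have F_integrable: "integrable (M \<Otimes>\<^sub>M lborel) F"
  proof (rule Bochner_Integration.integrable_bound[OF _ F_measurable], intro AE_I2)
    fix z :: "'a \<times> real" assume "z \<in> space (M \<Otimes>\<^sub>M lborel)"
    have "\<bar>\<Prod>j\<in>J. \<psi> j (snd z - \<omega> j (fst z))\<bar> \<le> (\<Prod>j\<in>J. B j)"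
      unfolding abs_prod using B by (intro prod_mono) auto
    moreover have "0 \<le> (\<Prod>j\<in>J. B j)"
      using B by (intro prod_nonneg) (meson abs_ge_zero order_trans)
    ultimately show "norm (F z) \<le> norm ((\<Prod>j\<in>J. B j) * indicator (space M \<times> {0..1::real}) z)"
      using \<open>z \<in> space (M \<Otimes>\<^sub>M lborel)\<close> by (auto simp: F_def space_pair_measure indicator_def)
  qed
  then show "integrable M (\<lambda>x. LINT t:{0..1}|lborel. \<Prod>j\<in>J. \<psi> j (t - \<omega> j x))"
    using integrable_fst[of "curry F"] by (simp add: F_def set_lebesgue_integral_def)
  have "(\<integral>x. F (x, t) \<partial>M) = indicator {0..1} t * (\<Prod>j\<in>J. LINT s:{0..1}|lborel. \<psi> j s)" for t
  proof -
    have "finite J" by (rule J(1))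
    moreover have "indep_vars (\<lambda>_. borel) (\<lambda>j x. \<psi> j (t - \<omega> j x)) J"
      using indep_vars_subset[OF indep J(2)] by (rule indep_vars_compose2) (use \<psi>_measurable in auto)
    moreover have "integrable M (\<lambda>x. \<psi> j (t - \<omega> j x))" if "j \<in> J" for j
      using B[OF that] \<psi>_measurable[OF that] \<omega>_measurable[OF that]
      by (intro integrable_const_bound[where B="B j"]) auto
    ultimately have "(\<integral>x. (\<Prod>j\<in>J. \<psi> j (t - \<omega> j x)) \<partial>M) = (\<Prod>j\<in>J. \<integral>x. \<psi> j (t - \<omega> j x) \<partial>M)"
      by (rule indep_vars_lebesgue_integral)
    also have "\<dots> = (\<Prod>j\<in>J. LINT s:{0..1}|lborel. \<psi> j s)"
      using J(2) \<psi> \<omega>_measurable by (intro prod.cong refl integral_uniform_periodic uniform) auto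
    finally show ?thesis
      by (simp add: F_def)
  qed
  then have "(\<integral>x. (\<integral>t. F (x, t) \<partial>lborel) \<partial>M) = (\<Prod>j\<in>J. LINT s:{0..1}|lborel. \<psi> j s)"
    using Fubini_integral[of "curry F"] F_integrable by simp
  then show "expectation (\<lambda>x. LINT t:{0..1}|lborel. \<Prod>j\<in>J. \<psi> j (t - \<omega> j x))
      = (\<Prod>j\<in>J. LINT s:{0..1}|lborel. \<psi> j s)"
    by (simp add: F_def set_lebesgue_integral_def)
qed

end



lemma integral_abs_Df_increment_powr_le:
  assumes l: "\<And>j. 1 \<le> j \<Longrightarrow> l j < 1" and k: "1 \<le> k" and h: "0 < h" and p: "1 \<le> p"
  defines "v \<equiv> \<lambda>s. \<bar>gap_density (l k) (s + h) - gap_density (l k) s\<bar>"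
    and "y \<equiv> \<lambda>s. \<bar>gap_density (l k) s - of_bool (1 < k)\<bar>"
    and "\<delta> \<equiv> \<lambda>j s. \<bar>arc_indicator (l j) (s + h) - arc_indicator (l j) s\<bar>"
  shows "(LINT t:{0..1}|lborel. \<bar>Df l om k (t + h) - Df l om k t\<bar>) powr p
    \<le> 2 powr p * ((LINT s:{0..1}|lborel. v s) powr (p - 1)
          * (LINT t:{0..1}|lborel. Mf l om (k - 1) (t + h) powr p * v (t - om k))
        + (LINT s:{0..1}|lborel. y s) powr (p - 1)
          * (\<Sum>j\<in>{1..k-1}. \<Sum>\<sigma>\<in>{0, h}.
              LINT t:{0..1}|lborel. Mf l om (k - 1) (t + \<sigma>) powr p * \<delta> j (t - om j) * y (t - om k)))"
proof -
  define N where "N \<sigma> t = Mf l om (k - 1) (t + \<sigma>)" for \<sigma> t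
  have N_nonneg: "0 \<le> N \<sigma> t" for \<sigma> t
    unfolding N_def using l by (rule Mf_nonneg)
  have N_prod: "N \<sigma> t = (\<Prod>j\<in>{1..k-1}. gap_density (l j) (t - om j + \<sigma>))" for \<sigma> t
    by (simp add: N_def Mf_def Xf_eq_gap_density diff_add_eq)
  have bdd_N: "bounded_borel (N \<sigma>)" for \<sigma>
    unfolding N_def by (rule bounded_borel_shift[OF bounded_borel_Mf])
  have bdd_v: "bounded_borel v" and bdd_y: "bounded_borel y"
    unfolding v_def y_def
    by (intro bounded_borel_abs bounded_borel_diff bounded_borel_gap_density bounded_borel_const
        bounded_borel_shift[OF bounded_borel_gap_density])+
  have "bounded_borel (\<lambda>s. \<bar>arc_indicator L (s + h) - arc_indicator L s\<bar>)" for L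
    by (intro bounded_borel_abs bounded_borel_diff bounded_borel_arc_indicator
        bounded_borel_shift[OF bounded_borel_arc_indicator])
  then have bdd_\<delta>: "bounded_borel (\<lambda>t. \<delta> j (t - om j))" for j
    unfolding \<delta>_def by (rule bounded_borel_shift_minus)
  have periodic: "periodic_fun_simple' v" "periodic_fun_simple' y"
    unfolding v_def y_def by (unfold_locales, simp)+
  have nonneg: "0 \<le> v s" "0 \<le> y s" for s
    by (simp_all add: v_def y_def)
  have integrable: "set_integrable lborel {0..1} (\<lambda>t. f t * g t)" if "bounded_borel f" "bounded_borel g" for f g
    using that by (intro bounded_borel_unit_integrable bounded_borel_mult)
  have D: "Df l om k (t + \<sigma>) = N \<sigma> t * (gap_density (l k) (t - om k + \<sigma>) - of_bool (1 < k))" for t \<sigma>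
    using k by (simp add: N_def Df_eq_Mf_times Xf_eq_gap_density diff_add_eq)
  have pointwise: "\<bar>Df l om k (t + h) - Df l om k t\<bar> \<le> N h t * v (t - om k) + \<bar>N h t - N 0 t\<bar> * y (t - om k)"
    for t
  proof -
    have "Df l om k (t + h) - Df l om k t
        = N h t * (gap_density (l k) (t - om k + h) - gap_density (l k) (t - om k))
          + (N h t - N 0 t) * (gap_density (l k) (t - om k) - of_bool (1 < k))"
      using D[of t h] D[of t 0] by (simp add: algebra_simps)
    also have "\<bar>\<dots>\<bar> \<le> N h t * v (t - om k) + \<bar>N h t - N 0 t\<bar> * y (t - om k)"
      by (rule order_trans[OF abs_triangle_ineq]) (use N_nonneg[of h t] in \<open>simp add: v_def y_def abs_mult\<close>)
    finally show ?thesis .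
  qed
  have "bounded_borel (Df l om k)"
    unfolding Df_def[abs_def]
    by (cases "k = 1") (simp_all add: bounded_borel_Mf bounded_borel_diff)
  then have "(LINT t:{0..1}|lborel. \<bar>Df l om k (t + h) - Df l om k t\<bar>)
      \<le> (LINT t:{0..1}|lborel. N h t * v (t - om k) + \<bar>N h t - N 0 t\<bar> * y (t - om k))"
    using pointwise bdd_N bounded_borel_shift_minus[OF bdd_v] bounded_borel_shift_minus[OF bdd_y]
    by (intro set_integral_mono bounded_borel_unit_integrable)
      (simp_all add: bounded_borel_abs bounded_borel_diff bounded_borel_add bounded_borel_mult bounded_borel_shift)
  also have "\<dots> = (LINT t:{0..1}|lborel. N h t * v (t - om k)) + (LINT t:{0..1}|lborel. \<bar>N h t - N 0 t\<bar> * y (t - om k))"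
    using bdd_N bounded_borel_shift_minus[OF bdd_v] bounded_borel_shift_minus[OF bdd_y]
    by (intro set_integral_add(2) bounded_borel_unit_integrable)
      (simp_all add: bounded_borel_abs bounded_borel_diff bounded_borel_mult)
  finally have S_le: "(LINT t:{0..1}|lborel. \<bar>Df l om k (t + h) - Df l om k t\<bar>) \<le> \<dots>" .
  have "\<bar>N h t - N 0 t\<bar> powr p * y (t - om k)
      \<le> (\<Sum>j\<in>{1..k-1}. \<Sum>\<sigma>\<in>{0, h}. N \<sigma> t powr p * \<delta> j (t - om j) * y (t - om k))" for t
  proof -
    have "\<bar>N h t - N 0 t\<bar> powr p \<le> (N h t powr p + N 0 t powr p) * (\<Sum>j\<in>{1..k-1}. \<delta> j (t - om j))"
      using abs_prod_diff_powr_le[of "{1..k-1}" "\<lambda>j. gap_density (l j) (t - om j + h)"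
          "\<lambda>j. gap_density (l j) (t - om j + 0)" p] l p
      by (simp add: N_prod \<delta>_def gap_density_nonneg abs_gap_density_diff)
    then have "\<bar>N h t - N 0 t\<bar> powr p * y (t - om k)
        \<le> (N h t powr p + N 0 t powr p) * (\<Sum>j\<in>{1..k-1}. \<delta> j (t - om j)) * y (t - om k)"
      using nonneg(2) by (rule mult_right_mono)
    also have "\<dots> = (\<Sum>j\<in>{1..k-1}. \<Sum>\<sigma>\<in>{0, h}. N \<sigma> t powr p * \<delta> j (t - om j) * y (t - om k))"
      using h by (simp add: sum_distrib_left sum_distrib_right algebra_simps sum.distrib)
    finally show ?thesis .
  qed
  moreover have bdd_term: "bounded_borel (\<lambda>t. N \<sigma> t powr p * \<delta> j (t - om j) * y (t - om k))" for \<sigma> j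
    using p N_nonneg
    by (intro bounded_borel_mult bounded_borel_powr bdd_N bdd_\<delta> bounded_borel_shift_minus[OF bdd_y]) auto
  moreover have bdd_dN: "bounded_borel (\<lambda>t. \<bar>N h t - N 0 t\<bar>)"
    by (intro bounded_borel_abs bounded_borel_diff bdd_N)
  ultimately have "(LINT t:{0..1}|lborel. \<bar>N h t - N 0 t\<bar> powr p * y (t - om k))
      \<le> (LINT t:{0..1}|lborel. \<Sum>j\<in>{1..k-1}. \<Sum>\<sigma>\<in>{0, h}. N \<sigma> t powr p * \<delta> j (t - om j) * y (t - om k))"
    using p
    by (intro set_integral_mono bounded_borel_unit_integrable bounded_borel_sum bdd_term bounded_borel_mult
        bounded_borel_powr bounded_borel_shift_minus[OF bdd_y] bdd_dN) auto
  also have "\<dots> = (\<Sum>j\<in>{1..k-1}. \<Sum>\<sigma>\<in>{0, h}. LINT t:{0..1}|lborel. N \<sigma> t powr p * \<delta> j (t - om j) * y (t - om k))"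
    using bdd_term by (simp add: set_integral_sum bounded_borel_unit_integrable bounded_borel_sum)
  finally have B_sum: "(LINT t:{0..1}|lborel. \<bar>N h t - N 0 t\<bar> powr p * y (t - om k)) \<le> \<dots>" .
  have A_le: "(LINT t:{0..1}|lborel. N h t * v (t - om k)) powr p
      \<le> (LINT s:{0..1}|lborel. v s) powr (p - 1) * (LINT t:{0..1}|lborel. N h t powr p * v (t - om k))"
    using bdd_N N_nonneg bdd_v periodic(1) nonneg(1) p by (rule set_integral_powr_periodic_weight_le)
  have "(LINT t:{0..1}|lborel. \<bar>N h t - N 0 t\<bar> * y (t - om k)) powr p
      \<le> (LINT s:{0..1}|lborel. y s) powr (p - 1) * (LINT t:{0..1}|lborel. \<bar>N h t - N 0 t\<bar> powr p * y (t - om k))"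
    using bdd_dN _ bdd_y periodic(2) nonneg(2) p by (rule set_integral_powr_periodic_weight_le) simp
  also have "\<dots> \<le> (LINT s:{0..1}|lborel. y s) powr (p - 1)
      * (\<Sum>j\<in>{1..k-1}. \<Sum>\<sigma>\<in>{0, h}. LINT t:{0..1}|lborel. N \<sigma> t powr p * \<delta> j (t - om j) * y (t - om k))"
    using B_sum by (rule mult_left_mono) simp
  finally have B_le: "(LINT t:{0..1}|lborel. \<bar>N h t - N 0 t\<bar> * y (t - om k)) powr p \<le> \<dots>" .
  have "(LINT t:{0..1}|lborel. \<bar>Df l om k (t + h) - Df l om k t\<bar>) powr p
      \<le> ((LINT t:{0..1}|lborel. N h t * v (t - om k)) + (LINT t:{0..1}|lborel. \<bar>N h t - N 0 t\<bar> * y (t - om k))) powr p"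
    using S_le p by (intro powr_mono2 set_integral_nonneg) auto
  also have "\<dots> \<le> 2 powr p * ((LINT t:{0..1}|lborel. N h t * v (t - om k)) powr p
      + (LINT t:{0..1}|lborel. \<bar>N h t - N 0 t\<bar> * y (t - om k)) powr p)"
    using N_nonneg nonneg p by (intro powr_add_le set_integral_nonneg) auto
  also have "\<dots> \<le> 2 powr p * ((LINT s:{0..1}|lborel. v s) powr (p - 1) * (LINT t:{0..1}|lborel. N h t powr p * v (t - om k))
      + (LINT s:{0..1}|lborel. y s) powr (p - 1)
        * (\<Sum>j\<in>{1..k-1}. \<Sum>\<sigma>\<in>{0, h}. LINT t:{0..1}|lborel. N \<sigma> t powr p * \<delta> j (t - om j) * y (t - om k)))"
    using A_le B_le by (intro mult_left_mono add_mono) auto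
  finally show ?thesis
    by (simp add: N_def)
qed




lemma prod_atLeastAtMost_last:
  fixes k :: nat
  assumes "1 \<le> k"
  shows "(\<Prod>j\<in>{1..k}. f j) = (\<Prod>j\<in>{1..k-1}. f j) * f k"
proof -
  have "{1..k} = insert k {1..k-1}"
    using assms by auto
  with assms show ?thesis
    by (simp add: mult.commute)
qed

lemma powr_minus_one_mult: "0 \<le> x \<Longrightarrow> x powr (p - 1) * x = x powr p"
  for x p :: real
  by (cases "x = 0") (simp_all add: powr_diff)

lemma integral_le_by_integrable_majorant:
  fixes f g :: "'a \<Rightarrow> real"
  assumes "\<And>x. x \<in> space M \<Longrightarrow> f x \<le> g x" "integrable M g" "integral\<^sup>L M g \<le> R" "0 \<le> R"
  shows "integral\<^sup>L M f \<le> R"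
proof (cases "integrable M f")
  case True
  then show ?thesis
    using assms integral_mono[of M f g] by simp
qed (use assms in \<open>simp add: not_integrable_integral_eq\<close>)

lemma set_integral_shifted_gap_density_powr:
  assumes "0 \<le> L" "L < 1" "0 < p"
  shows "(LINT s:{0..1}|lborel. gap_density L (s + \<sigma>) powr p) = (1 - L) powr (1 - p)"
proof -
  have "periodic_fun_simple' (\<lambda>s. gap_density L s powr p)"
    by unfold_locales simp
  moreover have "bounded_borel (\<lambda>s. gap_density L s powr p)"
    using assms by (intro bounded_borel_powr bounded_borel_gap_density) (auto simp: gap_density_nonneg)
  ultimately show ?thesis
    using set_integral_periodic_shift[of "\<lambda>s. gap_density L s powr p" \<sigma>] set_integral_gap_density_powr[OF assms]
    by simp
qed

lemma gap_density_powr_le: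
  assumes "L < 1"
  shows "gap_density L v powr p \<le> (1 - L) powr (1 - p) / (1 - L)"
proof -
  have "(1 - L) powr (1 - p) / (1 - L) = 1 / (1 - L) powr p"
    using assms by (simp add: powr_diff)
  then show ?thesis
    using assms arc_indicator_cases[of L v] by (auto simp: gap_density_def powr_divide)
qed

lemma set_integral_gap_density_powr_arc_increment_le:
  assumes "0 \<le> L" "L < 1" "0 < p" "0 < h"
  shows "(LINT s:{0..1}|lborel. gap_density L (s + \<sigma>) powr p * \<bar>arc_indicator L (s + h) - arc_indicator L s\<bar>)
    \<le> (1 - L) powr (1 - p) * (2 * h / (1 - L))"
proof -
  have "bounded_borel (\<lambda>s. \<bar>arc_indicator L (s + h) - arc_indicator L s\<bar>)"
    by (intro bounded_borel_abs bounded_borel_diff bounded_borel_arc_indicator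
        bounded_borel_shift[OF bounded_borel_arc_indicator])
  moreover have "bounded_borel (\<lambda>s. gap_density L (s + \<sigma>) powr p)"
    using assms by (intro bounded_borel_powr bounded_borel_shift[OF bounded_borel_gap_density])
      (auto simp: gap_density_nonneg)
  ultimately have "(LINT s:{0..1}|lborel. gap_density L (s + \<sigma>) powr p * \<bar>arc_indicator L (s + h) - arc_indicator L s\<bar>)
      \<le> (LINT s:{0..1}|lborel. (1 - L) powr (1 - p) / (1 - L) * \<bar>arc_indicator L (s + h) - arc_indicator L s\<bar>)"
    using assms gap_density_powr_le
    by (intro set_integral_mono bounded_borel_unit_integrable bounded_borel_mult bounded_borel_const mult_right_mono)
      auto
  also have "\<dots> = (1 - L) powr (1 - p) / (1 - L) * (LINT s:{0..1}|lborel. \<bar>arc_indicator L (s + h) - arc_indicator L s\<bar>)"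
    by (rule set_integral_mult_right)
  also have "\<dots> \<le> (1 - L) powr (1 - p) / (1 - L) * (2 * h)"
    using assms by (intro mult_left_mono set_integral_arc_indicator_increment) auto
  finally show ?thesis
    by simp
qed

lemma set_integral_gap_density_increment_le:
  assumes "0 \<le> L" "L < 1" "0 < h"
  shows "(LINT s:{0..1}|lborel. \<bar>gap_density L (s + h) - gap_density L s\<bar>) \<le> 2 * h / (1 - L)"
proof -
  have "\<bar>gap_density L (s + h) - gap_density L s\<bar> = \<bar>arc_indicator L (s + h) - arc_indicator L s\<bar> / (1 - L)" for s
    using assms by (simp add: gap_density_def diff_divide_distrib[symmetric] abs_minus_commute)
  then have "(LINT s:{0..1}|lborel. \<bar>gap_density L (s + h) - gap_density L s\<bar>)
      = (LINT s:{0..1}|lborel. \<bar>arc_indicator L (s + h) - arc_indicator L s\<bar>) / (1 - L)"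
    by simp
  also have "\<dots> \<le> 2 * h / (1 - L)"
    using assms by (intro divide_right_mono set_integral_arc_indicator_increment) auto
  finally show ?thesis .
qed

lemma set_integral_abs_gap_density_offset:
  fixes k :: nat
  assumes "0 \<le> L" "L < 1" "1 \<le> k"
  shows "(LINT s:{0..1}|lborel. \<bar>gap_density L s - of_bool (1 < k)\<bar>) = (if k = 1 then 1 else 2 * L)"
proof (cases "k = 1")
  case False
  with assms have "1 < k"
    by simp
  with assms show ?thesis
    by (simp add: set_integral_abs_gap_density_minus_1)
qed (use assms in \<open>simp add: set_integral_abs_gap_density\<close>)

context iid_uniform_circle
begin

lemma expectation_Mf_powr_prod:
  fixes \<sigma> p :: real
  assumes l: "\<And>j. 1 \<le> j \<Longrightarrow> l j < 1" and k: "1 \<le> k" and p: "0 \<le> p"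
    and \<rho>: "\<And>j. j \<in> {1..k-1} \<Longrightarrow> bounded_borel (\<rho> j)" "\<And>j. j \<in> {1..k-1} \<Longrightarrow> periodic_fun_simple' (\<rho> j)"
    and w: "bounded_borel w" "periodic_fun_simple' w"
  defines "G \<equiv> \<lambda>x. LINT t:{0..1}|lborel.
      Mf l (\<lambda>j. \<omega> j x) (k - 1) (t + \<sigma>) powr p * (\<Prod>j\<in>{1..k-1}. \<rho> j (t - \<omega> j x)) * w (t - \<omega> k x)"
  shows "integrable M G"
    and "expectation G
      = (\<Prod>j\<in>{1..k-1}. LINT s:{0..1}|lborel. gap_density (l j) (s + \<sigma>) powr p * \<rho> j s)
        * (LINT s:{0..1}|lborel. w s)"
proof -
  define \<psi> where "\<psi> j = (if j = k then w else (\<lambda>v. gap_density (l j) (v + \<sigma>) powr p * \<rho> j v))" for j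
  have "(\<Prod>j\<in>{1..k}. \<psi> j (t - \<omega> j x))
      = Mf l (\<lambda>j. \<omega> j x) (k - 1) (t + \<sigma>) powr p * (\<Prod>j\<in>{1..k-1}. \<rho> j (t - \<omega> j x)) * w (t - \<omega> k x)"
    for t x
  proof -
    have "(\<Prod>j\<in>{1..k-1}. \<psi> j (t - \<omega> j x))
        = (\<Prod>j\<in>{1..k-1}. gap_density (l j) (t + \<sigma> - \<omega> j x) powr p * \<rho> j (t - \<omega> j x))"
      by (intro prod.cong) (auto simp: \<psi>_def diff_add_eq)
    then show ?thesis
      unfolding prod_atLeastAtMost_last[OF k] by (simp add: \<psi>_def Mf_powr prod.distrib)
  qed
  then have G_eq: "G = (\<lambda>x. LINT t:{0..1}|lborel. \<Prod>j\<in>{1..k}. \<psi> j (t - \<omega> j x))"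
    by (simp add: G_def)
  have "bounded_borel (\<psi> j) \<and> periodic_fun_simple' (\<psi> j)" if "j \<in> {1..k}" for j
  proof (cases "j = k")
    case False
    with that have j: "j \<in> {1..k-1}" by auto
    have "bounded_borel (\<lambda>v. gap_density (l j) (v + \<sigma>) powr p * \<rho> j v)"
      using l p \<rho>(1)[OF j] j
      by (intro bounded_borel_mult bounded_borel_powr bounded_borel_shift[OF bounded_borel_gap_density])
        (auto simp: gap_density_nonneg)
    moreover have "periodic_fun_simple' (\<lambda>v. gap_density (l j) (v + \<sigma>) powr p * \<rho> j v)"
      using periodic_fun_simple'.plus_period[OF \<rho>(2)[OF j]] by unfold_locales simp
    ultimately show ?thesis
      using False by (simp add: \<psi>_def)
  qed (simp add: \<psi>_def w)
  then have "integrable M G \<and> expectation G = (\<Prod>j\<in>{1..k}. LINT s:{0..1}|lborel. \<psi> j s)"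
    unfolding G_eq by (auto intro!: integral_shifted_prod)
  moreover have "(\<Prod>j\<in>{1..k-1}. LINT s:{0..1}|lborel. \<psi> j s)
      = (\<Prod>j\<in>{1..k-1}. LINT s:{0..1}|lborel. gap_density (l j) (s + \<sigma>) powr p * \<rho> j s)"
    by (rule prod.cong) (auto simp: \<psi>_def)
  ultimately show "integrable M G"
    and "expectation G = (\<Prod>j\<in>{1..k-1}. LINT s:{0..1}|lborel. gap_density (l j) (s + \<sigma>) powr p * \<rho> j s)
        * (LINT s:{0..1}|lborel. w s)"
    unfolding prod_atLeastAtMost_last[OF k] by (simp_all add: \<psi>_def)
qed

lemma expectation_abs_Df_powr_le:
  assumes l: "\<And>j. 1 \<le> j \<Longrightarrow> 0 < l j \<and> l j < 1" and k: "1 \<le> k" and p: "1 \<le> p"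
  shows "expectation (\<lambda>x. (LINT t:{0..1}|lborel. \<bar>Df l (\<lambda>j. \<omega> j x) k t\<bar>) powr p)
    \<le> (\<Prod>j\<in>{1..k-1}. (1 - l j) powr (1 - p))
      * (LINT s:{0..1}|lborel. \<bar>gap_density (l k) s - of_bool (1 < k)\<bar>) powr p"
proof -
  define y where "y s = \<bar>gap_density (l k) s - of_bool (1 < k)\<bar>" for s
  define \<beta> where "\<beta> = (LINT s:{0..1}|lborel. y s)"
  define P where "P = (\<Prod>j\<in>{1..k-1}. (1 - l j) powr (1 - p))"
  define G where "G = (\<lambda>x. LINT t:{0..1}|lborel. Mf l (\<lambda>j. \<omega> j x) (k - 1) t powr p * y (t - \<omega> k x))"
  have l1: "\<And>j. 1 \<le> j \<Longrightarrow> l j < 1"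
    using l by blast
  have y_bdd: "bounded_borel y"
    unfolding y_def by (intro bounded_borel_abs bounded_borel_diff bounded_borel_gap_density bounded_borel_const)
  have y_per: "periodic_fun_simple' y"
    unfolding y_def by unfold_locales simp
  have y_nonneg: "0 \<le> y s" for s
    by (simp add: y_def)
  have pointwise: "(LINT t:{0..1}|lborel. \<bar>Df l (\<lambda>j. \<omega> j x) k t\<bar>) powr p \<le> \<beta> powr (p - 1) * G x" for x
  proof -
    have "\<bar>Df l (\<lambda>j. \<omega> j x) k t\<bar> = Mf l (\<lambda>j. \<omega> j x) (k - 1) t * y (t - \<omega> k x)" for t
      using k Mf_nonneg[where l=l, OF l1] by (simp add: Df_eq_Mf_times Xf_eq_gap_density y_def abs_mult)
    moreover have "(LINT t:{0..1}|lborel. Mf l (\<lambda>j. \<omega> j x) (k - 1) t * y (t - \<omega> k x)) powr p \<le> \<beta> powr (p - 1) * G x"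
      unfolding \<beta>_def G_def
      by (rule set_integral_powr_periodic_weight_le[OF bounded_borel_Mf Mf_nonneg[where l=l, OF l1] y_bdd y_per y_nonneg p])
    ultimately show ?thesis
      by simp
  qed
  note E = expectation_Mf_powr_prod[where l=l and k=k and p=p and \<rho>="\<lambda>_ _. 1" and w=y and \<sigma>=0,
      OF l1 k order_trans[OF zero_le_one p]
      bounded_borel_const periodic_fun_simple'_const y_bdd y_per]
  have "(\<Prod>j\<in>{1..k-1}. LINT s:{0..1}|lborel. gap_density (l j) (s + 0) powr p * 1) = P"
    unfolding P_def using l p by (intro prod.cong refl) (auto simp: set_integral_gap_density_powr less_imp_le)
  with E have G: "integrable M G" "expectation G = P * \<beta>"
    by (simp_all add: G_def \<beta>_def)
  have "0 \<le> \<beta>" "0 \<le> P"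
    unfolding \<beta>_def P_def using y_nonneg by (auto intro: set_integral_nonneg prod_nonneg)
  show ?thesis
    unfolding y_def[symmetric] \<beta>_def[symmetric] P_def[symmetric]
  proof (rule integral_le_by_integrable_majorant)
    show "integrable M (\<lambda>x. \<beta> powr (p - 1) * G x)"
      using G(1) by simp
    have "expectation (\<lambda>x. \<beta> powr (p - 1) * G x) = P * (\<beta> powr (p - 1) * \<beta>)"
      using G(2) by simp
    then show "expectation (\<lambda>x. \<beta> powr (p - 1) * G x) \<le> P * \<beta> powr p"
      using \<open>0 \<le> \<beta>\<close> by (simp add: powr_minus_one_mult)
  qed (use pointwise \<open>0 \<le> P\<close> in auto)
qed

lemma expectation_Mf_powr_arc_increment_le:
  fixes \<sigma> p :: real
  assumes l: "\<And>i. 1 \<le> i \<Longrightarrow> 0 < l i \<and> l i < 1" and K: "\<And>i. 1 \<le> i \<Longrightarrow> 1 / (1 - l i) \<le> K"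
    and j: "j \<in> {1..k-1}" and h: "0 < h" and p: "0 < p"
    and w: "bounded_borel w" "periodic_fun_simple' w" "\<And>v. 0 \<le> w v"
  defines "G \<equiv> \<lambda>x. LINT t:{0..1}|lborel. Mf l (\<lambda>i. \<omega> i x) (k - 1) (t + \<sigma>) powr p
      * \<bar>arc_indicator (l j) (t - \<omega> j x + h) - arc_indicator (l j) (t - \<omega> j x)\<bar> * w (t - \<omega> k x)"
  shows "integrable M G"
    and "expectation G \<le> (\<Prod>i\<in>{1..k-1}. (1 - l i) powr (1 - p)) * (2 * h * K) * (LINT s:{0..1}|lborel. w s)"
proof -
  define \<rho> where "\<rho> = (\<lambda>i v. if i = j then \<bar>arc_indicator (l j) (v + h) - arc_indicator (l j) v\<bar> else 1)"
  have k: "1 \<le> k" and l1: "\<And>i. 1 \<le> i \<Longrightarrow> l i < 1"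
    using j l by auto
  have \<rho>: "bounded_borel (\<rho> i) \<and> periodic_fun_simple' (\<rho> i)" for i
  proof (cases "i = j")
    case True
    have "bounded_borel (\<lambda>v. \<bar>arc_indicator (l j) (v + h) - arc_indicator (l j) v\<bar>)"
      by (intro bounded_borel_abs bounded_borel_diff bounded_borel_arc_indicator
          bounded_borel_shift[OF bounded_borel_arc_indicator])
    moreover have "periodic_fun_simple' (\<lambda>v. \<bar>arc_indicator (l j) (v + h) - arc_indicator (l j) v\<bar>)"
      by unfold_locales simp
    ultimately show ?thesis
      using True by (simp add: \<rho>_def)
  qed (simp add: \<rho>_def bounded_borel_const periodic_fun_simple'_const)
  note E = expectation_Mf_powr_prod[where l=l and k=k and p=p and \<rho>=\<rho> and w=w and \<sigma>=\<sigma>,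
      OF l1 k less_imp_le[OF p] \<rho>[THEN conjunct1] \<rho>[THEN conjunct2] w(1,2)]
  have G_eq: "G = (\<lambda>x. LINT t:{0..1}|lborel.
      Mf l (\<lambda>i. \<omega> i x) (k - 1) (t + \<sigma>) powr p * (\<Prod>i\<in>{1..k-1}. \<rho> i (t - \<omega> i x)) * w (t - \<omega> k x))"
    using j by (simp add: G_def \<rho>_def)
  show "integrable M G"
    unfolding G_eq by (rule E(1))
  have "(\<Prod>i\<in>{1..k-1}. LINT s:{0..1}|lborel. gap_density (l i) (s + \<sigma>) powr p * \<rho> i s)
      \<le> (\<Prod>i\<in>{1..k-1}. (1 - l i) powr (1 - p) * (if i = j then 2 * h * K else 1))"
  proof (rule prod_mono, rule conjI)
    fix i assume i: "i \<in> {1..k-1}"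
    then have li: "0 \<le> l i" "l i < 1"
      using l by (auto simp: less_imp_le)
    show "0 \<le> (LINT s:{0..1}|lborel. gap_density (l i) (s + \<sigma>) powr p * \<rho> i s)"
      by (rule set_integral_nonneg) (simp add: \<rho>_def)
    show "(LINT s:{0..1}|lborel. gap_density (l i) (s + \<sigma>) powr p * \<rho> i s)
        \<le> (1 - l i) powr (1 - p) * (if i = j then 2 * h * K else 1)"
    proof (cases "i = j")
      case True
      have "2 * h / (1 - l i) = 2 * h * (1 / (1 - l i))"
        by simp
      also have "\<dots> \<le> 2 * h * K"
        using K[of i] i h by (intro mult_left_mono) auto
      finally have "(1 - l i) powr (1 - p) * (2 * h / (1 - l i)) \<le> (1 - l i) powr (1 - p) * (2 * h * K)"
        by (intro mult_left_mono) auto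
      with True li h p show ?thesis
        using set_integral_gap_density_powr_arc_increment_le[of "l i" p h \<sigma>] by (simp add: \<rho>_def)
    qed (use li p in \<open>simp add: \<rho>_def set_integral_shifted_gap_density_powr\<close>)
  qed
  also have "\<dots> = (\<Prod>i\<in>{1..k-1}. (1 - l i) powr (1 - p)) * (2 * h * K)"
    using j by (simp add: prod.distrib)
  finally have prod_le: "(\<Prod>i\<in>{1..k-1}. LINT s:{0..1}|lborel. gap_density (l i) (s + \<sigma>) powr p * \<rho> i s)
      \<le> (\<Prod>i\<in>{1..k-1}. (1 - l i) powr (1 - p)) * (2 * h * K)" .
  have "expectation G = (\<Prod>i\<in>{1..k-1}. LINT s:{0..1}|lborel. gap_density (l i) (s + \<sigma>) powr p * \<rho> i s)
      * (LINT s:{0..1}|lborel. w s)"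
    unfolding G_eq by (rule E(2))
  also have "\<dots> \<le> (\<Prod>i\<in>{1..k-1}. (1 - l i) powr (1 - p)) * (2 * h * K) * (LINT s:{0..1}|lborel. w s)"
    using prod_le w(3) by (intro mult_right_mono set_integral_nonneg) auto
  finally show "expectation G \<le> (\<Prod>i\<in>{1..k-1}. (1 - l i) powr (1 - p)) * (2 * h * K) * (LINT s:{0..1}|lborel. w s)" .
qed

lemma expectation_abs_Df_increment_powr_le:
  assumes l: "\<And>j. 1 \<le> j \<Longrightarrow> 0 < l j \<and> l j < 1" and K: "\<And>j. 1 \<le> j \<Longrightarrow> 1 / (1 - l j) \<le> K"
    and k: "1 \<le> k" and h: "0 < h" and p: "1 \<le> p"
  shows "expectation (\<lambda>x. (LINT t:{0..1}|lborel. \<bar>Df l (\<lambda>j. \<omega> j x) k (t + h) - Df l (\<lambda>j. \<omega> j x) k t\<bar>) powr p)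
    \<le> 2 powr p * (\<Prod>j\<in>{1..k-1}. (1 - l j) powr (1 - p)) * ((2 * h * K) powr p
      + 4 * h * K * real (k - 1) * (LINT s:{0..1}|lborel. \<bar>gap_density (l k) s - of_bool (1 < k)\<bar>) powr p)"
proof -
  define v where "v = (\<lambda>s. \<bar>gap_density (l k) (s + h) - gap_density (l k) s\<bar>)"
  define y where "y = (\<lambda>s. \<bar>gap_density (l k) s - of_bool (1 < k)\<bar>)"
  define \<gamma> where "\<gamma> = (LINT s:{0..1}|lborel. v s)"
  define \<beta> where "\<beta> = (LINT s:{0..1}|lborel. y s)"
  define P where "P = (\<Prod>j\<in>{1..k-1}. (1 - l j) powr (1 - p))"
  define GA where "GA = (\<lambda>x. LINT t:{0..1}|lborel. Mf l (\<lambda>j. \<omega> j x) (k - 1) (t + h) powr p * v (t - \<omega> k x))"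
  define GB where "GB = (\<lambda>\<sigma> j x. LINT t:{0..1}|lborel. Mf l (\<lambda>i. \<omega> i x) (k - 1) (t + \<sigma>) powr p
      * \<bar>arc_indicator (l j) (t - \<omega> j x + h) - arc_indicator (l j) (t - \<omega> j x)\<bar> * y (t - \<omega> k x))"
  define g where "g = (\<lambda>x. 2 powr p * (\<gamma> powr (p - 1) * GA x
      + \<beta> powr (p - 1) * (\<Sum>j\<in>{1..k-1}. \<Sum>\<sigma>\<in>{0, h}. GB \<sigma> j x)))"
  have l1: "\<And>j. 1 \<le> j \<Longrightarrow> l j < 1" and lk: "0 \<le> l k" "l k < 1"
    using l k by (auto simp: less_imp_le)
  have "0 < 1 / (1 - l 1)"
    using l[of 1] by simp
  then have "0 \<le> K"
    using K[of 1] by linarith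
  have v: "bounded_borel v" "periodic_fun_simple' v" "\<And>s. 0 \<le> v s"
    unfolding v_def
    by (intro bounded_borel_abs bounded_borel_diff bounded_borel_gap_density
        bounded_borel_shift[OF bounded_borel_gap_density]) (unfold_locales, simp_all)
  have y: "bounded_borel y" "periodic_fun_simple' y" "\<And>s. 0 \<le> y s"
    unfolding y_def
    by (intro bounded_borel_abs bounded_borel_diff bounded_borel_gap_density bounded_borel_const)
      (unfold_locales, simp_all)
  have pointwise: "(LINT t:{0..1}|lborel. \<bar>Df l (\<lambda>j. \<omega> j x) k (t + h) - Df l (\<lambda>j. \<omega> j x) k t\<bar>) powr p \<le> g x"
    for x
    using integral_abs_Df_increment_powr_le[where l=l and om="\<lambda>j. \<omega> j x", OF l1 k h p]
    by (simp add: g_def GA_def GB_def v_def y_def \<gamma>_def \<beta>_def)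
  note EA = expectation_Mf_powr_prod[where l=l and k=k and p=p and \<rho>="\<lambda>_ _. 1" and w=v and \<sigma>=h,
      OF l1 k order_trans[OF zero_le_one p] bounded_borel_const periodic_fun_simple'_const v(1,2)]
  have "(\<Prod>j\<in>{1..k-1}. LINT s:{0..1}|lborel. gap_density (l j) (s + h) powr p * 1) = P"
    unfolding P_def using l p by (intro prod.cong refl) (auto simp: set_integral_shifted_gap_density_powr less_imp_le)
  with EA have GA: "integrable M GA" "expectation GA = P * \<gamma>"
    by (simp_all add: GA_def \<gamma>_def)
  have GB: "integrable M (GB \<sigma> j)" "expectation (GB \<sigma> j) \<le> P * (2 * h * K) * \<beta>" if "j \<in> {1..k-1}" for \<sigma> j
    using expectation_Mf_powr_arc_increment_le[where l=l and w=y and \<sigma>=\<sigma>, OF l K that h _ y]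
      order_less_le_trans[OF zero_less_one p]
    by (simp_all add: GB_def P_def \<beta>_def)
  have "0 \<le> \<gamma>" "0 \<le> \<beta>" "0 \<le> P"
    unfolding \<gamma>_def \<beta>_def P_def using v(3) y(3) by (auto intro: set_integral_nonneg prod_nonneg)
  have "\<gamma> \<le> 2 * h * K"
  proof -
    have "\<gamma> \<le> 2 * h / (1 - l k)"
      unfolding \<gamma>_def v_def using lk h by (rule set_integral_gap_density_increment_le)
    also have "\<dots> = 2 * h * (1 / (1 - l k))"
      by simp
    also have "\<dots> \<le> 2 * h * K"
      using K[OF k] h by (intro mult_left_mono) auto
    finally show ?thesis .
  qed
  have "integrable M g"
    unfolding g_def using GA(1) GB(1)
    by (intro integrable_mult_right Bochner_Integration.integrable_add Bochner_Integration.integrable_sum) auto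
  have int_sum: "integrable M (\<lambda>x. \<Sum>j\<in>{1..k-1}. \<Sum>\<sigma>\<in>{0, h}. GB \<sigma> j x)"
    using GB(1) by (intro Bochner_Integration.integrable_sum) auto
  have "expectation (\<lambda>x. \<Sum>j\<in>{1..k-1}. \<Sum>\<sigma>\<in>{0, h}. GB \<sigma> j x)
      = (\<Sum>j\<in>{1..k-1}. expectation (\<lambda>x. \<Sum>\<sigma>\<in>{0, h}. GB \<sigma> j x))"
    by (rule Bochner_Integration.integral_sum) (use GB(1) in \<open>auto intro!: Bochner_Integration.integrable_sum\<close>)
  also have "\<dots> = (\<Sum>j\<in>{1..k-1}. \<Sum>\<sigma>\<in>{0, h}. expectation (GB \<sigma> j))"
    by (intro sum.cong refl Bochner_Integration.integral_sum) (use GB(1) in auto)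
  finally have "expectation g = 2 powr p * (\<gamma> powr (p - 1) * expectation GA
      + \<beta> powr (p - 1) * (\<Sum>j\<in>{1..k-1}. \<Sum>\<sigma>\<in>{0, h}. expectation (GB \<sigma> j)))"
    unfolding g_def using GA(1) int_sum by (simp add: Bochner_Integration.integral_add)
  also have "\<dots> \<le> 2 powr p * (\<gamma> powr (p - 1) * (P * \<gamma>)
      + \<beta> powr (p - 1) * (\<Sum>j\<in>{1..k-1}. \<Sum>\<sigma>\<in>{0, h}. P * (2 * h * K) * \<beta>))"
    using GA(2) GB(2) by (intro mult_left_mono add_mono sum_mono) auto
  also have "\<dots> = 2 powr p * P * (\<gamma> powr (p - 1) * \<gamma> + 4 * h * K * real (k - 1) * (\<beta> powr (p - 1) * \<beta>))"
    using h by (simp add: algebra_simps)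
  also have "\<dots> = 2 powr p * P * (\<gamma> powr p + 4 * h * K * real (k - 1) * \<beta> powr p)"
    using \<open>0 \<le> \<gamma>\<close> \<open>0 \<le> \<beta>\<close> by (simp add: powr_minus_one_mult)
  also have "\<dots> \<le> 2 powr p * P * ((2 * h * K) powr p + 4 * h * K * real (k - 1) * \<beta> powr p)"
    using \<open>0 \<le> \<gamma>\<close> \<open>\<gamma> \<le> 2 * h * K\<close> \<open>0 \<le> P\<close> p by (intro mult_left_mono add_right_mono powr_mono2) auto
  finally have E_g: "expectation g \<le> \<dots>" .
  have "0 \<le> 2 powr p * P * ((2 * h * K) powr p + 4 * h * K * real (k - 1) * \<beta> powr p)"
    using \<open>0 \<le> P\<close> \<open>0 \<le> K\<close> h by (intro mult_nonneg_nonneg add_nonneg_nonneg) auto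
  with pointwise \<open>integrable M g\<close> E_g show ?thesis
    unfolding y_def[symmetric] \<beta>_def[symmetric] P_def[symmetric] by (rule integral_le_by_integrable_majorant)
qed


lemma expectation_abs_Df_powr_le_const:
  assumes l: "\<And>j. 1 \<le> j \<Longrightarrow> 0 < l j \<and> l j < 1" and k: "1 \<le> k" and p: "1 \<le> p"
    and Q: "(if k = 1 then 1 else 2 * l k) \<le> Q * l k" and C: "Q powr p \<le> C"
  shows "expectation (\<lambda>x. (LINT t:{0..1}|lborel. \<bar>Df l (\<lambda>j. \<omega> j x) k t\<bar>) powr p)
    \<le> C * l k powr p * (\<Prod>j\<in>{1..k-1}. (1 - l j) powr (1 - p))"
proof -
  define P where "P = (\<Prod>j\<in>{1..k-1}. (1 - l j) powr (1 - p))"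
  have "0 \<le> P"
    unfolding P_def by (intro prod_nonneg) auto
  have "(LINT s:{0..1}|lborel. \<bar>gap_density (l k) s - of_bool (1 < k)\<bar>) = (if k = 1 then 1 else 2 * l k)"
    using l[OF k] k by (intro set_integral_abs_gap_density_offset) auto
  also have "\<dots> \<le> Q * l k"
    by (rule Q)
  finally have "(LINT s:{0..1}|lborel. \<bar>gap_density (l k) s - of_bool (1 < k)\<bar>) powr p \<le> (Q * l k) powr p"
    using p by (intro powr_mono2 set_integral_nonneg) auto
  also have "\<dots> \<le> C * l k powr p"
    using l[OF k] C Q by (auto simp: powr_mult intro: mult_right_mono)
  finally have "(LINT s:{0..1}|lborel. \<bar>gap_density (l k) s - of_bool (1 < k)\<bar>) powr p \<le> C * l k powr p" .
  from this \<open>0 \<le> P\<close> have "P * (LINT s:{0..1}|lborel. \<bar>gap_density (l k) s - of_bool (1 < k)\<bar>) powr p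
      \<le> P * (C * l k powr p)"
    by (rule mult_left_mono)
  with expectation_abs_Df_powr_le[where l=l, OF l k p] show ?thesis
    unfolding P_def by (simp add: mult_ac)
qed

lemma expectation_abs_Df_increment_powr_le_const:
  assumes l: "\<And>j. 1 \<le> j \<Longrightarrow> 0 < l j \<and> l j < 1" and K: "\<And>j. 1 \<le> j \<Longrightarrow> 1 / (1 - l j) \<le> K"
    and k: "1 \<le> k" and h: "0 < h" and p: "1 \<le> p"
    and Q: "(if k = 1 then 1 else 2 * l k) \<le> Q * l k" and C: "2 powr p * ((2 * K) powr p + 4 * K * Q powr p) \<le> C"
  shows "expectation (\<lambda>x. (LINT t:{0..1}|lborel. \<bar>Df l (\<lambda>j. \<omega> j x) k (t + h) - Df l (\<lambda>j. \<omega> j x) k t\<bar>) powr p)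
    \<le> C * (h powr p + h * real k * l k powr p) * (\<Prod>j\<in>{1..k-1}. (1 - l j) powr (1 - p))"
proof -
  define P where "P = (\<Prod>j\<in>{1..k-1}. (1 - l j) powr (1 - p))"
  define \<beta> where "\<beta> = (LINT s:{0..1}|lborel. \<bar>gap_density (l k) s - of_bool (1 < k)\<bar>)"
  have "0 \<le> P"
    unfolding P_def by (intro prod_nonneg) auto
  have "0 < 1 / (1 - l 1)"
    using l[of 1] by simp
  then have "0 \<le> K"
    using K[of 1] by linarith
  have "\<beta> = (if k = 1 then 1 else 2 * l k)"
    unfolding \<beta>_def using l[OF k] k by (intro set_integral_abs_gap_density_offset) auto
  then have "0 \<le> \<beta>" "\<beta> \<le> Q * l k"
    using l[OF k] Q by auto
  then have "\<beta> powr p \<le> (Q * l k) powr p"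
    using p by (intro powr_mono2) auto
  then have "\<beta> powr p \<le> Q powr p * l k powr p"
    by (simp add: powr_mult)
  then have "real (k - 1) * \<beta> powr p \<le> real k * (Q powr p * l k powr p)"
    by (intro mult_mono) auto
  then have "4 * h * K * (real (k - 1) * \<beta> powr p) \<le> 4 * h * K * (real k * (Q powr p * l k powr p))"
    using h \<open>0 \<le> K\<close> by (intro mult_left_mono) auto
  then have "(2 * h * K) powr p + 4 * h * K * real (k - 1) * \<beta> powr p
      \<le> (2 * K) powr p * h powr p + 4 * K * Q powr p * (h * real k * l k powr p)"
    by (simp add: powr_mult algebra_simps)
  also have "\<dots> \<le> ((2 * K) powr p + 4 * K * Q powr p) * (h powr p + h * real k * l k powr p)"
    using h \<open>0 \<le> K\<close> by (simp add: algebra_simps)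
  finally have "2 powr p * P * ((2 * h * K) powr p + 4 * h * K * real (k - 1) * \<beta> powr p)
      \<le> 2 powr p * P * (((2 * K) powr p + 4 * K * Q powr p) * (h powr p + h * real k * l k powr p))"
    using \<open>0 \<le> P\<close> by (intro mult_left_mono) auto
  also have "\<dots> = 2 powr p * ((2 * K) powr p + 4 * K * Q powr p) * (h powr p + h * real k * l k powr p) * P"
    by (simp add: mult_ac)
  also have "\<dots> \<le> C * (h powr p + h * real k * l k powr p) * P"
    using C \<open>0 \<le> P\<close> h by (intro mult_right_mono) auto
  finally show ?thesis
    using expectation_abs_Df_increment_powr_le[where l=l, OF l K k h p] unfolding P_def[symmetric] \<beta>_def[symmetric]
    by linarith
qed

end

theorem proposition3p2:
  fixes l :: "nat \<Rightarrow> real" and p :: real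
  assumes l_bounds: "\<And>k. k \<ge> 1 \<Longrightarrow> 0 < l k \<and> l k < 1"
    and l_mono: "\<And>k. k \<ge> 1 \<Longrightarrow> l (Suc k) \<le> l k"
    and p_bounds: "1 < p" "p \<le> 2"
  shows "\<exists>C::real. \<forall>(M :: 'a measure) (\<omega> :: nat \<Rightarrow> 'a \<Rightarrow> real).
     (prob_space M
      \<and> prob_space.indep_vars M (\<lambda>_. borel) \<omega> {1..}
      \<and> (\<forall>k\<ge>1. distr M borel (\<omega> k) = uniform_measure lborel {0..<1}))
     \<longrightarrow>
     (\<forall>k\<ge>1. \<forall>h>0.
        prob_space.expectation M
          (\<lambda>x. (LINT t:{0..1}|lborel. \<bar>Df l (\<lambda>j. \<omega> j x) k (t + h) - Df l (\<lambda>j. \<omega> j x) k t\<bar>) powr p)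
        \<le> C * (h powr p + h * real k * l k powr p) * (\<Prod>j\<in>{1..k-1}. (1 - l j) powr (1 - p)))
     \<and>
     (\<forall>k\<ge>1.
        prob_space.expectation M
          (\<lambda>x. (LINT t:{0..1}|lborel. \<bar>Df l (\<lambda>j. \<omega> j x) k t\<bar>) powr p)
        \<le> C * l k powr p * (\<Prod>j\<in>{1..k-1}. (1 - l j) powr (1 - p)))"
proof -
  have l_le_l1: "l k \<le> l 1" if "1 \<le> k" for k
    using that by (induction k rule: dec_induct) (auto intro: order_trans[OF l_mono])
  define K where "K = 1 / (1 - l 1)"
  define Q where "Q = 2 / l 1"
  define C where "C = 2 powr p * ((2 * K) powr p + 4 * K * Q powr p) + Q powr p"
  have K: "1 / (1 - l k) \<le> K" and Q: "(if k = 1 then 1 else 2 * l k) \<le> Q * l k" if "1 \<le> k" for k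
    using that l_bounds[OF that] l_bounds[of 1] l_le_l1[OF that]
    by (auto simp: K_def Q_def frac_le field_simps)
  have C: "2 powr p * ((2 * K) powr p + 4 * K * Q powr p) \<le> C" "Q powr p \<le> C"
    using l_bounds[of 1] by (auto simp: C_def K_def Q_def)
  show ?thesis
  proof (intro exI[of _ C] allI impI)
    fix M :: "'a measure" and \<omega> :: "nat \<Rightarrow> 'a \<Rightarrow> real"
    assume "prob_space M \<and> prob_space.indep_vars M (\<lambda>_. borel) \<omega> {1..}
      \<and> (\<forall>k\<ge>1. distr M borel (\<omega> k) = uniform_measure lborel {0..<1})"
    then interpret iid_uniform_circle M \<omega>
      by (auto simp: iid_uniform_circle_def iid_uniform_circle_axioms_def)
    show "(\<forall>k\<ge>1. \<forall>h>0. expectation (\<lambda>x. (LINT t:{0..1}|lborel.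
          \<bar>Df l (\<lambda>j. \<omega> j x) k (t + h) - Df l (\<lambda>j. \<omega> j x) k t\<bar>) powr p)
        \<le> C * (h powr p + h * real k * l k powr p) * (\<Prod>j\<in>{1..k-1}. (1 - l j) powr (1 - p)))
      \<and> (\<forall>k\<ge>1. expectation (\<lambda>x. (LINT t:{0..1}|lborel. \<bar>Df l (\<lambda>j. \<omega> j x) k t\<bar>) powr p)
        \<le> C * l k powr p * (\<Prod>j\<in>{1..k-1}. (1 - l j) powr (1 - p)))"
      using expectation_abs_Df_increment_powr_le_const[where l=l, OF l_bounds K _ _ _ Q]
        expectation_abs_Df_powr_le_const[where l=l, OF l_bounds _ _ Q] C p_bounds
      by auto
  qed
qed

end
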